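(* In the two-bidder, two-configuration asymmetric setting below, assume $0<p<1$, $r_1>0$, and additionally $r'_1\ge r'_2$ (uniform winner), $r_2\ge r'_2$ (congruent loser) and $r_2\le\mu_1$ (weak competition). Then every calibrated information structure has revenue at most $$\frac{p\,r_1r_2+(1-p)\,r'_1r'_2}{\mu_1},$$ and, when $r_2<\mu_1$, this bound is attained by the calibrated information structure that fully bundles the winner and unbundles the loser, i.e. which sends $s=(\mu_1,r_2)$ when the CTR vector is $(r_1,r_2)$ and $s=(\mu_1,r'_2)$ when it is $(r'_1,r'_2)$.
   Context: Setting. Two bidders with values $v_1=v_2=1$. The CTR vector equals $(r_1,r_2)$ with probability $p$ and $(r'_1,r'_2)$ with probability $1-p$, all entries in $[0,1]$, labeled so that $r_1\ge r'_1$, $r_1\ge r_2$, $r_1\ge r'_2$. Let $\mu_1=pr_1+(1-p)r'_1$. An information structure is a finitely supported probability distribution on pairs $(r,s)\in[0,1]^2\times[0,1]^2$ whose $r$-marginal is this prior. Given signals $s$, the winner $i^*$ maximizes $s_i$ (uniform tie-breaking), pays per click $s_j/s_{i^*}$ with $j\ne i^*$ (revenue $0$ if $s_{i^*}=0$), only upon a click, which occurs with probability $r_{i^*}$; revenue is $\mathbb{E}[r_{i^*}p_{i^*}]$. Calibrated: $\mathbb{E}[r_i\mid s_i=t]=t$ for every $i$ and every $t$ with $\Pr[s_i=t]>0$. *)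

theory Defs
  imports "HOL-Probability.Probability"
begin

text \<open>A point of an information structure is a pair (r, s) where r = (r_1, r_2) is the
CTR vector and s = (s_1, s_2) the signal vector.\<close>

type_synonym point = "(real \<times> real) \<times> (real \<times> real)"

definition coord :: "nat \<Rightarrow> real \<times> real \<Rightarrow> real" where
  "coord i x = (if i = 1 then fst x else snd x)"

definition prior :: "real \<Rightarrow> real \<Rightarrow> real \<Rightarrow> real \<Rightarrow> real \<Rightarrow> (real \<times> real) pmf" where
  "prior p r1 r2 r1' r2' =
     map_pmf (\<lambda>b. if b then (r1, r2) else (r1', r2')) (bernoulli_pmf p)"

definition info_structure :: "(real \<times> real) pmf \<Rightarrow> point pmf \<Rightarrow> bool" where
  "info_structure P I \<longleftrightarrow>
     finite (set_pmf I) \<and>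
     (\<forall>((a, b), (c, d)) \<in> set_pmf I.
        a \<in> {0..1} \<and> b \<in> {0..1} \<and> c \<in> {0..1} \<and> d \<in> {0..1}) \<and>
     map_pmf fst I = P"

definition calibrated :: "point pmf \<Rightarrow> bool" where
  "calibrated I \<longleftrightarrow>
     (\<forall>i \<in> {1::nat, 2}. \<forall>t::real.
        measure_pmf.prob I {x. coord i (snd x) = t} > 0 \<longrightarrow>
        measure_pmf.expectation (cond_pmf I {x. coord i (snd x) = t}) (\<lambda>x. coord i (fst x)) = t)"

text \<open>Expected revenue at a realization (r, s): highest signal wins (uniform tie-breaking),
pays s_j / s_winner per click, clicks with probability r_winner; revenue 0 if the winning
signal is 0.\<close>
definition outcome_revenue :: "real \<times> real \<Rightarrow> real \<times> real \<Rightarrow> real" where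
  "outcome_revenue r s =
     (let (r1, r2) = r; (s1, s2) = s in
      if s1 > s2 then (if s1 = 0 then 0 else r1 * (s2 / s1))
      else if s2 > s1 then (if s2 = 0 then 0 else r2 * (s1 / s2))
      else (if s1 = 0 then 0 else (r1 * (s2 / s1) + r2 * (s1 / s2)) / 2))"

definition revenue :: "point pmf \<Rightarrow> real" where
  "revenue I = measure_pmf.expectation I (\<lambda>(r, s). outcome_revenue r s)"

end

theory Submission
  imports Defs
begin

text \<open>Calibration of a signal \<open>s\<^sub>i\<close> gives \<open>E[(r\<^sub>i - s\<^sub>i) h(s\<^sub>i)] = 0\<close> for every test function
\<open>h\<close> and keeps \<open>s\<^sub>i\<close> between the smallest and the largest possible value of \<open>r\<^sub>i\<close>. As the loser
is congruent, \<open>(r\<^sub>1 - s\<^sub>1)(s\<^sub>2 - r\<^sub>2) \<le> 0\<close> at every point, so the revenue, at most \<open>r\<^sub>1 s\<^sub>2 / s\<^sub>1\<close>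
since the winner is uniform, is at most \<open>r\<^sub>1 r\<^sub>2 / s\<^sub>1 + s\<^sub>2 - r\<^sub>2\<close>, and \<open>s\<^sub>2 - r\<^sub>2\<close> has mean zero.
On the two CTR vectors \<open>r\<^sub>1 r\<^sub>2 = \<alpha> + \<beta> r\<^sub>1\<close> with \<open>\<alpha> \<le> 0\<close>, hence
\<open>E[r\<^sub>1 r\<^sub>2 / s\<^sub>1] = \<alpha> E[1/s\<^sub>1] + \<beta> \<le> \<alpha> / \<mu>\<^sub>1 + \<beta>\<close> by Jensen's inequality for \<open>1/x\<close> and
\<open>E[s\<^sub>1] = \<mu>\<^sub>1\<close>; this is the bound. Bundling the winner makes \<open>s\<^sub>1 = \<mu>\<^sub>1 > s\<^sub>2\<close> everywhere,
and then every inequality above is an equality.\<close>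

definition calibrated_signal :: "'a pmf \<Rightarrow> ('a \<Rightarrow> real) \<Rightarrow> ('a \<Rightarrow> real) \<Rightarrow> bool" where
  "calibrated_signal I R S \<longleftrightarrow>
     (\<forall>t. measure_pmf.prob I {x. S x = t} > 0 \<longrightarrow>
        measure_pmf.expectation (cond_pmf I {x. S x = t}) R = t)"

lemma calibrated_iff_calibrated_signal:
  "calibrated I \<longleftrightarrow>
     calibrated_signal I (\<lambda>x. fst (fst x)) (\<lambda>x. fst (snd x)) \<and>
     calibrated_signal I (\<lambda>x. snd (fst x)) (\<lambda>x. snd (snd x))"
  by (simp add: calibrated_def calibrated_signal_def coord_def)

lemma calibrated_signal_uminus:
  assumes "calibrated_signal I R S"
  shows "calibrated_signal I (\<lambda>x. - R x) (\<lambda>x. - S x)"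
  unfolding calibrated_signal_def
proof (intro allI impI)
  fix t
  have level: "{x. - S x = t} = {x. S x = - t}" by auto
  assume "measure_pmf.prob I {x. - S x = t} > 0"
  then show "measure_pmf.expectation (cond_pmf I {x. - S x = t}) (\<lambda>x. - R x) = t"
    using assms unfolding calibrated_signal_def level by simp
qed

lemma calibrated_signal_truthful:
  assumes "\<And>x. x \<in> set_pmf I \<Longrightarrow> S x = R x"
  shows "calibrated_signal I R S"
  unfolding calibrated_signal_def
proof (intro allI impI)
  fix t
  let ?J = "cond_pmf I {x. S x = t}"
  assume "measure_pmf.prob I {x. S x = t} > 0"
  then have "set_pmf I \<inter> {x. S x = t} \<noteq> {}" by (simp add: measure_pmf_zero_iff[symmetric])
  then have "measure_pmf.expectation ?J R = measure_pmf.expectation ?J (\<lambda>_. t)"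
    using assms by (intro integral_cong_AE) (auto simp: AE_measure_pmf_iff)
  then show "measure_pmf.expectation ?J R = t" by simp
qed

lemma cond_pmf_superset:
  assumes "set_pmf I \<subseteq> A"
  shows "cond_pmf I A = I"
proof (rule pmf_eqI)
  fix x
  have ne: "set_pmf I \<inter> A \<noteq> {}" using assms set_pmf_not_empty[of I] by blast
  have "measure_pmf.prob I A = measure_pmf.prob I (A \<inter> set_pmf I)"
    by (rule measure_Int_set_pmf[symmetric])
  also have "\<dots> = measure_pmf.prob I (UNIV \<inter> set_pmf I)"
    using assms by (simp add: Int_absorb1)
  also have "\<dots> = 1" by (simp only: measure_Int_set_pmf measure_pmf_UNIV)
  finally have "measure_pmf.prob I A = 1" .
  moreover have "x \<notin> A \<Longrightarrow> pmf I x = 0" using assms by (auto simp: pmf_eq_0_set_pmf)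
  ultimately show "pmf (cond_pmf I A) x = pmf I x" by (simp add: pmf_cond[OF ne])
qed

lemma calibrated_signal_constant:
  assumes "\<And>x. x \<in> set_pmf I \<Longrightarrow> S x = c" and "measure_pmf.expectation I R = c"
  shows "calibrated_signal I R S"
  unfolding calibrated_signal_def
proof (intro allI impI)
  fix t
  assume "measure_pmf.prob I {x. S x = t} > 0"
  then have "set_pmf I \<inter> {x. S x = t} \<noteq> {}" by (simp add: measure_pmf_zero_iff[symmetric])
  then have "t = c" using assms(1) by auto
  then have "set_pmf I \<subseteq> {x. S x = t}" using assms(1) by auto
  then show "measure_pmf.expectation (cond_pmf I {x. S x = t}) R = t"
    using assms(2) \<open>t = c\<close> by (simp add: cond_pmf_superset)
qed

lemma expectation_cond_pmf_finite:
  assumes "finite (set_pmf I)" and "set_pmf I \<inter> A \<noteq> {}"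
  shows "measure_pmf.expectation (cond_pmf I A) f
           = (\<Sum>x\<in>set_pmf I \<inter> A. pmf I x * f x) / measure_pmf.prob I A"
proof -
  have "measure_pmf.expectation (cond_pmf I A) f
          = (\<Sum>x\<in>set_pmf I \<inter> A. f x * pmf (cond_pmf I A) x)"
    using assms by (intro integral_measure_pmf_real) auto
  also have "\<dots> = (\<Sum>x\<in>set_pmf I \<inter> A. pmf I x * f x / measure_pmf.prob I A)"
    by (intro sum.cong) (auto simp: pmf_cond[OF assms(2)])
  finally show ?thesis by (simp add: sum_divide_distrib)
qed

lemma calibrated_signal_level_sum:
  assumes fin: "finite (set_pmf I)" and cal: "calibrated_signal I R S"
  shows "(\<Sum>x\<in>{x\<in>set_pmf I. S x = t}. pmf I x * (R x - t)) = 0"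
proof (cases "{x\<in>set_pmf I. S x = t} = {}")
  case True
  then show ?thesis by (simp only: sum.empty)
next
  case False
  let ?A = "{x. S x = t}"
  have level: "{x\<in>set_pmf I. S x = t} = set_pmf I \<inter> ?A" by blast
  have ne: "set_pmf I \<inter> ?A \<noteq> {}" using False level by simp
  then have pos: "measure_pmf.prob I ?A > 0" by (auto intro: measure_pmf_posI)
  have prob: "measure_pmf.prob I ?A = (\<Sum>x\<in>set_pmf I \<inter> ?A. pmf I x)"
    using fin measure_Int_set_pmf[of I ?A]
    by (simp add: measure_measure_pmf_finite Int_commute)
  have "(\<Sum>x\<in>set_pmf I \<inter> ?A. pmf I x * R x) = t * measure_pmf.prob I ?A"
    using cal pos expectation_cond_pmf_finite[OF fin ne, of R]
    by (simp add: calibrated_signal_def field_simps)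
  then show ?thesis
    unfolding level prob by (simp add: right_diff_distrib sum_subtractf sum_distrib_left mult.commute)
qed

lemma calibrated_signal_orthogonal:
  assumes fin: "finite (set_pmf I)" and cal: "calibrated_signal I R S"
  shows "measure_pmf.expectation I (\<lambda>x. (R x - S x) * h (S x)) = 0"
proof -
  have "measure_pmf.expectation I (\<lambda>x. (R x - S x) * h (S x))
          = (\<Sum>x\<in>set_pmf I. pmf I x * ((R x - S x) * h (S x)))"
    using fin by (subst integral_measure_pmf_real[of "set_pmf I"]) (auto simp: mult.commute)
  also have "\<dots> = (\<Sum>t\<in>S ` set_pmf I. \<Sum>x\<in>{x\<in>set_pmf I. S x = t}. pmf I x * ((R x - S x) * h (S x)))"
    by (rule sum.image_gen[OF fin])
  also have "\<dots> = (\<Sum>t\<in>S ` set_pmf I. h t * (\<Sum>x\<in>{x\<in>set_pmf I. S x = t}. pmf I x * (R x - t)))"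
    by (auto simp: sum_distrib_left mult_ac intro!: sum.cong)
  also have "\<dots> = 0" by (simp add: calibrated_signal_level_sum[OF fin cal])
  finally show ?thesis .
qed

lemma calibrated_signal_eq_if_ge:
  assumes fin: "finite (set_pmf I)" and cal: "calibrated_signal I R S" and x0: "x0 \<in> set_pmf I"
    and ge: "\<And>x. x \<in> set_pmf I \<Longrightarrow> S x = S x0 \<Longrightarrow> S x0 \<le> R x"
  shows "R x0 = S x0"
proof -
  let ?L = "{x\<in>set_pmf I. S x = S x0}"
  have "\<forall>x\<in>?L. pmf I x * (R x - S x0) = 0"
    using calibrated_signal_level_sum[OF fin cal, of "S x0"] fin ge
    by (subst (asm) sum_nonneg_eq_0_iff) auto
  then show ?thesis using x0 by (auto simp: set_pmf_iff)
qed

lemma calibrated_signal_ge: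
  assumes fin: "finite (set_pmf I)" and cal: "calibrated_signal I R S" and x0: "x0 \<in> set_pmf I"
    and lower: "\<And>x. x \<in> set_pmf I \<Longrightarrow> L \<le> R x"
  shows "L \<le> S x0"
proof (rule ccontr)
  assume "\<not> L \<le> S x0"
  then have "R x0 = S x0"
    using calibrated_signal_eq_if_ge[OF fin cal x0] lower by force
  with \<open>\<not> L \<le> S x0\<close> lower[OF x0] show False by simp
qed

lemma calibrated_signal_le:
  assumes fin: "finite (set_pmf I)" and cal: "calibrated_signal I R S" and x0: "x0 \<in> set_pmf I"
    and upper: "\<And>x. x \<in> set_pmf I \<Longrightarrow> R x \<le> U"
  shows "S x0 \<le> U"
  using calibrated_signal_ge[OF fin calibrated_signal_uminus[OF cal] x0, of "- U"] upper by simp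

lemma outcome_revenue_le_ratio:
  fixes R1 R2 X Y :: real
  assumes "0 < X" "0 \<le> R2" "R2 \<le> R1"
  shows "outcome_revenue (R1, R2) (X, Y) \<le> R1 * Y / X"
proof -
  consider "Y < X" | "X < Y" | "X = Y" by linarith
  then show ?thesis
  proof cases
    case 1
    then show ?thesis using assms by (simp add: outcome_revenue_def)
  next
    case 2
    have "R2 * (X / Y) \<le> R2" using 2 assms by (intro mult_left_le) simp_all
    also have "R2 \<le> R1" by fact
    also have "R1 \<le> R1 * Y / X" using 2 assms by (simp add: le_divide_eq mult_left_mono)
    finally show ?thesis using 2 assms by (simp add: outcome_revenue_def)
  next
    case 3
    then show ?thesis using assms by (simp add: outcome_revenue_def)
  qed
qed

lemma outcome_revenue_zero_ctr: "outcome_revenue (0, 0) s = 0"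
  by (cases s) (simp add: outcome_revenue_def)

lemma inverse_ge_tangent:
  fixes x \<mu> :: real
  assumes "0 < x" "0 < \<mu>"
  shows "2 / \<mu> - x / \<mu>\<^sup>2 \<le> 1 / x"
proof -
  have "1 / x - (2 / \<mu> - x / \<mu>\<^sup>2) = (\<mu> - x)\<^sup>2 / (x * \<mu>\<^sup>2)"
    using assms by (simp add: field_simps power2_eq_square)
  moreover have "(\<mu> - x)\<^sup>2 / (x * \<mu>\<^sup>2) \<ge> 0" using assms by simp
  ultimately show ?thesis by linarith
qed

lemma product_ratio_le_tangent:
  fixes R1 R2 X \<alpha> \<beta> \<mu> :: real
  assumes affine: "R1 * R2 = \<alpha> + \<beta> * R1" and "\<alpha> \<le> 0" "0 \<le> \<beta>" "0 < \<mu>" "0 \<le> X"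
    and "X = 0 \<Longrightarrow> \<alpha> = 0"
  shows "R1 * R2 / X \<le> \<alpha> * (2 / \<mu> - X / \<mu>\<^sup>2) + \<beta> + \<beta> * ((R1 - X) * (1 / X))"
proof (cases "X = 0")
  case True
  \<comment> \<open>Both quotients by \<open>X\<close> are \<open>0\<close> by convention, leaving \<open>0 \<le> \<beta>\<close>.\<close>
  then show ?thesis using assms by simp
next
  case False
  then have "0 < X" using assms by simp
  have "R1 * R2 / X = \<alpha> * (1 / X) + \<beta> + \<beta> * ((R1 - X) * (1 / X))"
    using affine \<open>0 < X\<close> by (simp add: field_simps)
  also have "\<alpha> * (1 / X) \<le> \<alpha> * (2 / \<mu> - X / \<mu>\<^sup>2)"
    using inverse_ge_tangent[OF \<open>0 < X\<close> \<open>0 < \<mu>\<close>] \<open>\<alpha> \<le> 0\<close> by (rule mult_left_mono_neg)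
  finally show ?thesis by simp
qed

lemma product_affine_on_two_points:
  fixes a a' b b' :: real
  assumes "a' < a" "0 \<le> a'" "0 \<le> b'" "b' \<le> b"
  obtains \<alpha> \<beta> where "a * b = \<alpha> + \<beta> * a" "a' * b' = \<alpha> + \<beta> * a'" "\<alpha> \<le> 0" "0 \<le> \<beta>"
proof -
  define \<beta> where "\<beta> = (a * b - a' * b') / (a - a')"
  have "a' * b' \<le> a * b" using assms by (intro mult_mono) auto
  then have "0 \<le> \<beta>" using assms by (simp add: \<beta>_def)
  have "a' * b' - \<beta> * a' = a * a' * (b' - b) / (a - a')"
    using assms by (simp add: \<beta>_def field_simps)
  also have "\<dots> \<le> 0"
    using assms by (intro divide_nonpos_pos mult_nonneg_nonpos) auto
  finally have "a' * b' - \<beta> * a' \<le> 0" .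
  moreover have "\<beta> * (a - a') = a * b - a' * b'"
    using assms by (simp add: \<beta>_def)
  then have "a * b = (a' * b' - \<beta> * a') + \<beta> * a"
    by (simp add: algebra_simps)
  ultimately show ?thesis using \<open>0 \<le> \<beta>\<close> by (intro that) auto
qed

locale two_state_calibrated_auction =
  fixes p r1 r2 r1' r2' \<mu> :: real and I :: "point pmf"
  assumes mean_ctr: "\<mu> = p * r1 + (1 - p) * r1'"
    and p_pos: "0 < p" and p_le_1: "p \<le> 1"
    and r1_pos: "0 < r1" and r1'_nonneg: "0 \<le> r1'" and r2'_nonneg: "0 \<le> r2'"
    and r1'_le_r1: "r1' \<le> r1" and r2_le_r1: "r2 \<le> r1"
    and uniform_winner: "r2' \<le> r1'" and congruent_loser: "r2' \<le> r2"
    and info: "info_structure (prior p r1 r2 r1' r2') I"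
    and cal: "calibrated I"
begin

lemma finite_support: "finite (set_pmf I)"
  using info by (simp add: info_structure_def)

lemma integrable [simp]: "integrable (measure_pmf I) (f :: point \<Rightarrow> real)"
  using finite_support by (rule integrable_measure_pmf_finite)

lemma mean_ctr_pos: "0 < \<mu>"
proof -
  have "0 < p * r1" using p_pos r1_pos by simp
  moreover have "0 \<le> (1 - p) * r1'" using p_le_1 r1'_nonneg by simp
  ultimately show ?thesis unfolding mean_ctr by linarith
qed

lemma ctr_cases:
  assumes "x \<in> set_pmf I"
  shows "fst x = (r1, r2) \<or> fst x = (r1', r2')"
proof -
  have "map_pmf fst I = prior p r1 r2 r1' r2'" using info by (simp add: info_structure_def)
  then have "fst x \<in> set_pmf (prior p r1 r2 r1' r2')" using assms by (metis imageI set_map_pmf)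
  then show ?thesis by (auto simp: prior_def split: if_splits)
qed

lemma ctr_bounds:
  assumes "x \<in> set_pmf I"
  shows "r1' \<le> fst (fst x)" "fst (fst x) \<le> r1" "r2' \<le> snd (fst x)" "snd (fst x) \<le> r2"
  using ctr_cases[OF assms] r1'_le_r1 congruent_loser by auto

lemma expectation_ctr:
  "measure_pmf.expectation I (\<lambda>x. h (fst x)) = p * h (r1, r2) + (1 - p) * h (r1', r2')"
proof -
  have "measure_pmf.expectation I (\<lambda>x. h (fst x)) = measure_pmf.expectation (map_pmf fst I) h"
    by simp
  also have "\<dots> = p * h (r1, r2) + (1 - p) * h (r1', r2')"
    using info p_pos p_le_1 by (simp add: info_structure_def prior_def mult.commute)
  finally show ?thesis .
qed

lemma calibrated_winner: "calibrated_signal I (\<lambda>x. fst (fst x)) (\<lambda>x. fst (snd x))"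
  using cal by (simp add: calibrated_iff_calibrated_signal)

lemma calibrated_loser: "calibrated_signal I (\<lambda>x. snd (fst x)) (\<lambda>x. snd (snd x))"
  using cal by (simp add: calibrated_iff_calibrated_signal)

lemma signal_bounds:
  assumes "x \<in> set_pmf I"
  shows "r1' \<le> fst (snd x)" "fst (snd x) \<le> r1" "r2' \<le> snd (snd x)" "snd (snd x) \<le> r2"
  using calibrated_signal_ge[OF finite_support calibrated_winner assms, of r1']
    calibrated_signal_le[OF finite_support calibrated_winner assms, of r1]
    calibrated_signal_ge[OF finite_support calibrated_loser assms, of r2']
    calibrated_signal_le[OF finite_support calibrated_loser assms, of r2]
    ctr_bounds by simp_all

lemma winner_signal_zero:
  assumes "x \<in> set_pmf I" and "fst (snd x) = 0"
  shows "fst x = (0, 0)" and "r1' = 0"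
proof -
  have "fst (fst x) = 0"
    using calibrated_signal_eq_if_ge[OF finite_support calibrated_winner assms(1)] assms(2)
      ctr_bounds(1) r1'_nonneg by force
  then show "fst x = (0, 0)" and "r1' = 0"
    using ctr_cases[OF assms(1)] r1_pos r2'_nonneg uniform_winner by auto
qed

lemma mean_winner_signal: "measure_pmf.expectation I (\<lambda>x. fst (snd x)) = \<mu>"
  using calibrated_signal_orthogonal[OF finite_support calibrated_winner, of "\<lambda>_. 1"]
    expectation_ctr[of fst] mean_ctr by simp

lemma outcome_revenue_le_point:
  assumes x: "x \<in> set_pmf I"
  shows "outcome_revenue (fst x) (snd x)
           \<le> fst (fst x) * snd (fst x) / fst (snd x) + (snd (snd x) - snd (fst x))"
proof -
  obtain R1 R2 X Y where x_eq: "x = ((R1, R2), (X, Y))" by (metis prod.collapse)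
  note bounds = ctr_bounds[OF x] signal_bounds[OF x]
  show ?thesis
  proof (cases "X = 0")
    case True
    then have "fst x = (0, 0)" using winner_signal_zero(1)[OF x] x_eq by simp
    then show ?thesis using bounds r2'_nonneg x_eq by (simp add: outcome_revenue_zero_ctr)
  next
    case False
    then have "0 < X" using bounds r1'_nonneg x_eq by simp
    have "R2 \<le> R1" using ctr_cases[OF x] r2_le_r1 uniform_winner x_eq by auto
    then have "outcome_revenue (R1, R2) (X, Y) \<le> R1 * Y / X"
      using \<open>0 < X\<close> bounds x_eq r2'_nonneg by (intro outcome_revenue_le_ratio) simp_all
    also have "\<dots> = R1 * R2 / X + (Y - R2) + (R1 - X) * (Y - R2) / X"
      using \<open>0 < X\<close> by (simp add: field_simps)
    also have "\<dots> \<le> R1 * R2 / X + (Y - R2)"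
    proof -
      have "(R1 - X) * (Y - R2) \<le> 0"
        using ctr_cases[OF x] bounds x_eq
        by (auto intro: mult_nonneg_nonpos mult_nonpos_nonneg)
      then have "(R1 - X) * (Y - R2) / X \<le> 0" using \<open>0 < X\<close> by (rule divide_nonpos_pos)
      then show ?thesis by linarith
    qed
    finally show ?thesis using x_eq by simp
  qed
qed

lemma revenue_le_expected_ratio:
  "revenue I \<le> measure_pmf.expectation I (\<lambda>x. fst (fst x) * snd (fst x) / fst (snd x))"
proof -
  have "revenue I \<le> measure_pmf.expectation I
          (\<lambda>x. fst (fst x) * snd (fst x) / fst (snd x) + (snd (snd x) - snd (fst x)))"
    unfolding revenue_def case_prod_beta
    by (intro integral_mono_AE integrable AE_pmfI outcome_revenue_le_point)
  also have "\<dots> = measure_pmf.expectation I (\<lambda>x. fst (fst x) * snd (fst x) / fst (snd x))"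
    using calibrated_signal_orthogonal[OF finite_support calibrated_loser, of "\<lambda>_. 1"] by simp
  finally show ?thesis .
qed

lemma expected_ratio_le:
  "measure_pmf.expectation I (\<lambda>x. fst (fst x) * snd (fst x) / fst (snd x))
     \<le> (p * r1 * r2 + (1 - p) * r1' * r2') / \<mu>"
proof (cases "r1' = r1")
  case True
  then have "\<mu> = r1" using mean_ctr by (simp add: algebra_simps)
  have "fst (snd x) = \<mu>" if "x \<in> set_pmf I" for x
    using signal_bounds[OF that] True \<open>\<mu> = r1\<close> by simp
  then have "measure_pmf.expectation I (\<lambda>x. fst (fst x) * snd (fst x) / fst (snd x))
          = measure_pmf.expectation I (\<lambda>x. fst (fst x) * snd (fst x) / \<mu>)"
    by (intro integral_cong_AE) (simp_all add: AE_measure_pmf_iff)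
  also have "\<dots> = (p * r1 * r2 + (1 - p) * r1' * r2') / \<mu>"
    using expectation_ctr[of "\<lambda>(a, b). a * b / \<mu>"] by (simp add: case_prod_beta add_divide_distrib mult.assoc)
  finally show ?thesis by simp
next
  case False
  then have "r1' < r1" using r1'_le_r1 by simp
  then obtain \<alpha> \<beta> where affine: "r1 * r2 = \<alpha> + \<beta> * r1" "r1' * r2' = \<alpha> + \<beta> * r1'"
    and "\<alpha> \<le> 0" "0 \<le> \<beta>"
    using product_affine_on_two_points r1'_nonneg r2'_nonneg congruent_loser by metis
  define W where "W x = (fst (fst x) - fst (snd x)) * (1 / fst (snd x))" for x :: point
  have W_orthogonal: "measure_pmf.expectation I W = 0"
    unfolding W_def by (rule calibrated_signal_orthogonal[OF finite_support calibrated_winner])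
  have "measure_pmf.expectation I (\<lambda>x. fst (fst x) * snd (fst x) / fst (snd x))
          \<le> measure_pmf.expectation I (\<lambda>x. \<alpha> * (2 / \<mu> - fst (snd x) / \<mu>\<^sup>2) + \<beta> + \<beta> * W x)"
  proof (intro integral_mono_AE integrable AE_pmfI)
    fix x assume x: "x \<in> set_pmf I"
    have "fst (fst x) * snd (fst x) = \<alpha> + \<beta> * fst (fst x)"
      using ctr_cases[OF x] affine by auto
    moreover have "fst (snd x) = 0 \<Longrightarrow> \<alpha> = 0"
      using winner_signal_zero[OF x] affine(2) by simp
    ultimately show "fst (fst x) * snd (fst x) / fst (snd x)
        \<le> \<alpha> * (2 / \<mu> - fst (snd x) / \<mu>\<^sup>2) + \<beta> + \<beta> * W x"
      unfolding W_def using \<open>\<alpha> \<le> 0\<close> \<open>0 \<le> \<beta>\<close> mean_ctr_pos signal_bounds(1)[OF x] r1'_nonneg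
      by (intro product_ratio_le_tangent) auto
  qed
  also have "\<dots> = \<alpha> * (2 / \<mu> - \<mu> / \<mu>\<^sup>2) + \<beta>"
    using mean_winner_signal by (simp add: W_orthogonal)
  also have "\<dots> = (\<alpha> + \<beta> * \<mu>) / \<mu>"
    using mean_ctr_pos by (simp add: field_simps power2_eq_square)
  also have "\<alpha> + \<beta> * \<mu> = p * (\<alpha> + \<beta> * r1) + (1 - p) * (\<alpha> + \<beta> * r1')"
    unfolding mean_ctr by (simp add: algebra_simps)
  finally show ?thesis using affine by (simp add: mult.assoc)
qed

lemma revenue_le_bound: "revenue I \<le> (p * r1 * r2 + (1 - p) * r1' * r2') / \<mu>"
  using revenue_le_expected_ratio expected_ratio_le by (rule order_trans)

end

definition bundled_winner :: "real \<Rightarrow> real \<Rightarrow> real \<Rightarrow> real \<Rightarrow> real \<Rightarrow> real \<Rightarrow> point pmf" where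
  "bundled_winner p r1 r2 r1' r2' \<mu> =
     map_pmf (\<lambda>b. if b then ((r1, r2), (\<mu>, r2)) else ((r1', r2'), (\<mu>, r2'))) (bernoulli_pmf p)"

lemma bundled_winner_info_structure:
  fixes p r1 r2 r1' r2' \<mu> :: real
  assumes "0 \<le> p" "p \<le> 1" "r1 \<in> {0..1}" "r2 \<in> {0..1}" "r1' \<in> {0..1}" "r2' \<in> {0..1}"
    and "\<mu> = p * r1 + (1 - p) * r1'"
  shows "info_structure (prior p r1 r2 r1' r2') (bundled_winner p r1 r2 r1' r2' \<mu>)"
proof -
  have "0 \<le> \<mu>" "\<mu> \<le> 1" using assms by (auto intro: convex_bound_le)
  moreover have "finite (set_pmf (bernoulli_pmf p))" by (rule finite_subset[OF subset_UNIV]) simp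
  ultimately show ?thesis
    using assms unfolding info_structure_def prior_def bundled_winner_def map_pmf_comp
    by (auto intro: map_pmf_cong)
qed

lemma bundled_winner_calibrated:
  fixes p r1 r2 r1' r2' \<mu> :: real
  assumes "0 \<le> p" "p \<le> 1" and "\<mu> = p * r1 + (1 - p) * r1'"
  shows "calibrated (bundled_winner p r1 r2 r1' r2' \<mu>)"
  unfolding calibrated_iff_calibrated_signal
proof
  show "calibrated_signal (bundled_winner p r1 r2 r1' r2' \<mu>) (\<lambda>x. fst (fst x)) (\<lambda>x. fst (snd x))"
    using assms
    by (intro calibrated_signal_constant[where c = \<mu>]) (auto simp: bundled_winner_def mult.commute)
  show "calibrated_signal (bundled_winner p r1 r2 r1' r2' \<mu>) (\<lambda>x. snd (fst x)) (\<lambda>x. snd (snd x))"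
    by (rule calibrated_signal_truthful) (auto simp: bundled_winner_def)
qed

lemma bundled_winner_revenue:
  fixes p r1 r2 r1' r2' \<mu> :: real
  assumes "0 \<le> p" "p \<le> 1" "0 \<le> r2'" "r2' \<le> r2" "r2 < \<mu>"
  shows "revenue (bundled_winner p r1 r2 r1' r2' \<mu>) = (p * r1 * r2 + (1 - p) * r1' * r2') / \<mu>"
proof -
  have "0 < \<mu>" using assms by linarith
  with assms show ?thesis
    by (simp add: bundled_winner_def revenue_def outcome_revenue_def field_simps)
qed

theorem mainTheorem9:
  fixes p r1 r2 r1' r2' :: real
  defines "\<mu>1 \<equiv> p * r1 + (1 - p) * r1'"
  assumes "0 < p" "p < 1"
    and "r1 \<in> {0..1}" "r2 \<in> {0..1}" "r1' \<in> {0..1}" "r2' \<in> {0..1}"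
    and "r1 \<ge> r1'" "r1 \<ge> r2" "r1 \<ge> r2'"
    and "r1 > 0"
    and "r1' \<ge> r2'" "r2 \<ge> r2'" "r2 \<le> \<mu>1"
  shows "(\<forall>I. info_structure (prior p r1 r2 r1' r2') I \<and> calibrated I \<longrightarrow>
             revenue I \<le> (p * r1 * r2 + (1 - p) * r1' * r2') / \<mu>1)
       \<and> (r2 < \<mu>1 \<longrightarrow>
           (let I = map_pmf (\<lambda>b. if b then ((r1, r2), (\<mu>1, r2)) else ((r1', r2'), (\<mu>1, r2')))
                      (bernoulli_pmf p)
            in info_structure (prior p r1 r2 r1' r2') I \<and> calibrated I \<and>
               revenue I = (p * r1 * r2 + (1 - p) * r1' * r2') / \<mu>1))"
proof (intro conjI allI impI)
  fix I
  assume "info_structure (prior p r1 r2 r1' r2') I \<and> calibrated I"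
  then interpret two_state_calibrated_auction p r1 r2 r1' r2' \<mu>1 I
    using assms by unfold_locales (auto simp: \<mu>1_def)
  show "revenue I \<le> (p * r1 * r2 + (1 - p) * r1' * r2') / \<mu>1"
    by (rule revenue_le_bound)
next
  assume "r2 < \<mu>1"
  then have "info_structure (prior p r1 r2 r1' r2') (bundled_winner p r1 r2 r1' r2' \<mu>1) \<and>
      calibrated (bundled_winner p r1 r2 r1' r2' \<mu>1) \<and>
      revenue (bundled_winner p r1 r2 r1' r2' \<mu>1) = (p * r1 * r2 + (1 - p) * r1' * r2') / \<mu>1"
    using assms bundled_winner_info_structure bundled_winner_calibrated bundled_winner_revenue
    by (simp add: \<mu>1_def)
  then show "let I = map_pmf (\<lambda>b. if b then ((r1, r2), (\<mu>1, r2)) else ((r1', r2'), (\<mu>1, r2')))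
                      (bernoulli_pmf p)
            in info_structure (prior p r1 r2 r1' r2') I \<and> calibrated I \<and>
               revenue I = (p * r1 * r2 + (1 - p) * r1' * r2') / \<mu>1"
    by (simp add: bundled_winner_def)
qed

end
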